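(* Endow $\mathbb{R}^{t+1}$ with the inner product $(x,y)=\sum_{i=1}^{t+1}b^ix_iy_i$, where $b^1,\dots,b^{t+1}$ are positive integers, and let $\overline{\mathcal C}=\{x\in\mathbb{R}^{t+1}:x_1\le\cdots\le x_{t+1}\}$. Let $v\in\mathbb{R}^{t+1}\setminus\{0\}$ with $\sum_i v_ib^i=0$, and define $\mu_v(\Gamma)=(\Gamma,v)/\|\Gamma\|$ on $\overline{\mathcal C}\setminus\{0\}$. Assume some $\Gamma\in\overline{\mathcal C}$ has $\mu_v(\Gamma)>0$. Let $b_0=0$, $b_i=b^1+\dots+b^i$, $w_0=0$, $w_i=-\sum_{k\le i}b^kv_k$ (so $w_{t+1}=0$), let $(b_i,\widetilde w_i)$ be the points of the convex envelope (least concave majorant) of the piecewise linear graph through the points $(b_i,w_i)$, $i=0,\dots,t+1$, and define $\Gamma_v=(\Gamma_1,\dots,\Gamma_{t+1})$ by $\Gamma_i=-(\widetilde w_i-\widetilde w_{i-1})/b^i$. Then $\Gamma_v\in\overline{\mathcal C}\setminus\{0\}$ and $\Gamma_v$ attains the maximum of $\mu_v$ on $\overline{\mathcal C}\setminus\{0\}$. *)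

theory Defs
  imports "HOL-Analysis.Analysis"
begin

text \<open>Vectors in R^(t+1) are represented as functions nat => real, of which only the
coordinates 1..t+1 matter. The weights b^1,...,b^(t+1) are given by bw :: nat => nat.\<close>

definition ip :: "nat \<Rightarrow> (nat \<Rightarrow> nat) \<Rightarrow> (nat \<Rightarrow> real) \<Rightarrow> (nat \<Rightarrow> real) \<Rightarrow> real" where
  "ip t bw x y = (\<Sum>i=1..t+1. real (bw i) * x i * y i)"

definition wnorm :: "nat \<Rightarrow> (nat \<Rightarrow> nat) \<Rightarrow> (nat \<Rightarrow> real) \<Rightarrow> real" where
  "wnorm t bw x = sqrt (ip t bw x x)"

definition cone :: "nat \<Rightarrow> (nat \<Rightarrow> real) set" where
  "cone t = {x. \<forall>i\<in>{1..t}. x i \<le> x (i+1)}"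

definition nonzero_vec :: "nat \<Rightarrow> (nat \<Rightarrow> real) \<Rightarrow> bool" where
  "nonzero_vec t x \<longleftrightarrow> (\<exists>i\<in>{1..t+1}. x i \<noteq> 0)"

definition mu :: "nat \<Rightarrow> (nat \<Rightarrow> nat) \<Rightarrow> (nat \<Rightarrow> real) \<Rightarrow> (nat \<Rightarrow> real) \<Rightarrow> real" where
  "mu t bw v G = ip t bw G v / wnorm t bw G"

definition bs :: "(nat \<Rightarrow> nat) \<Rightarrow> nat \<Rightarrow> real" where
  "bs bw i = (\<Sum>k=1..i. real (bw k))"

definition ws :: "(nat \<Rightarrow> nat) \<Rightarrow> (nat \<Rightarrow> real) \<Rightarrow> nat \<Rightarrow> real" where
  "ws bw v i = - (\<Sum>k=1..i. real (bw k) * v k)"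

definition plin :: "(nat \<Rightarrow> nat) \<Rightarrow> (nat \<Rightarrow> real) \<Rightarrow> real \<Rightarrow> real" where
  "plin bw v s = (let i = (LEAST i. s \<le> bs bw i) in
      if i = 0 then ws bw v 0
      else ws bw v (i-1) + (ws bw v i - ws bw v (i-1)) * (s - bs bw (i-1)) / (bs bw i - bs bw (i-1)))"

definition concave_env :: "nat \<Rightarrow> (nat \<Rightarrow> nat) \<Rightarrow> (nat \<Rightarrow> real) \<Rightarrow> real \<Rightarrow> real" where
  "concave_env t bw v s = Inf {h s | h. concave_on {0..bs bw (t+1)} h \<and>
       (\<forall>r\<in>{0..bs bw (t+1)}. plin bw v r \<le> h r)}"

definition wt :: "nat \<Rightarrow> (nat \<Rightarrow> nat) \<Rightarrow> (nat \<Rightarrow> real) \<Rightarrow> nat \<Rightarrow> real" where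
  "wt t bw v i = concave_env t bw v (bs bw i)"

definition Gamma_v :: "nat \<Rightarrow> (nat \<Rightarrow> nat) \<Rightarrow> (nat \<Rightarrow> real) \<Rightarrow> nat \<Rightarrow> real" where
  "Gamma_v t bw v i = - (wt t bw v i - wt t bw v (i-1)) / real (bw i)"

end

theory Submission
  imports Defs
begin

text \<open>Summation by parts turns \<open>(x, v)\<close> into \<open>\<Sum>i=1..t. ws i * (x (i+1) - x i)\<close>, and
  \<open>(x, \<Gamma>\<^sub>v)\<close> into the same sum with the envelope values \<open>wt i\<close> in place of \<open>ws i\<close>. The
  values \<open>wt i\<close> form the least concave sequence above \<open>ws\<close>, because every concave sequence
  above \<open>ws\<close> interpolates to a concave majorant of \<open>plin\<close>. On the cone the increments
  \<open>x (i+1) - x i\<close> are nonnegative and \<open>ws \<le> wt\<close>, so \<open>(x, v) \<le> (x, \<Gamma>\<^sub>v)\<close>. Moreover \<open>\<Gamma>\<^sub>v\<close>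
  increases only at corners of the envelope, where a least concave majorant touches \<open>ws\<close>,
  so \<open>(\<Gamma>\<^sub>v, v) = \<parallel>\<Gamma>\<^sub>v\<parallel>\<^sup>2\<close>. Cauchy-Schwarz then gives
  \<open>\<mu>\<^sub>v x \<le> (x, \<Gamma>\<^sub>v) / \<parallel>x\<parallel> \<le> \<parallel>\<Gamma>\<^sub>v\<parallel> = \<mu>\<^sub>v \<Gamma>\<^sub>v\<close>.\<close>

lemma bs_0 [simp]: "bs bw 0 = 0"
  by (simp add: bs_def)

lemma bs_Suc: "bs bw (Suc i) = bs bw i + real (bw (Suc i))"
  by (simp add: bs_def)

lemma ws_0 [simp]: "ws bw v 0 = 0"
  by (simp add: ws_def)

lemma ws_Suc: "ws bw v (Suc i) = ws bw v i - real (bw (Suc i)) * v (Suc i)"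
  by (simp add: ws_def)

lemma bs_mono: "i \<le> j \<Longrightarrow> bs bw i \<le> bs bw j"
  by (induction j rule: dec_induct) (auto simp: bs_Suc)

lemma bs_strict_mono:
  assumes bpos: "\<forall>i\<in>{1..n}. bw i > 0" and "i < j" "j \<le> n"
  shows "bs bw i < bs bw j"
proof -
  have "bs bw i < bs bw (Suc i)"
    using bpos assms by (simp add: bs_Suc)
  also have "\<dots> \<le> bs bw j"
    using assms by (intro bs_mono) auto
  finally show ?thesis .
qed

lemma bs_in_range: "k \<le> t+1 \<Longrightarrow> bs bw k \<in> {0..bs bw (t+1)}"
  using bs_mono[of 0 k bw] bs_mono[of k "t+1" bw] by simp

subsection \<open>Concave sequences over the knots\<close>

definition slope :: "(nat \<Rightarrow> nat) \<Rightarrow> (nat \<Rightarrow> real) \<Rightarrow> nat \<Rightarrow> real" where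
  "slope bw y i = (y i - y (i-1)) / real (bw i)"

definition concave_seq :: "nat \<Rightarrow> (nat \<Rightarrow> nat) \<Rightarrow> (nat \<Rightarrow> real) \<Rightarrow> bool" where
  "concave_seq t bw y \<longleftrightarrow> (\<forall>j\<in>{1..t}. slope bw y (j+1) \<le> slope bw y j)"

lemma slope_mono: "y k \<le> z k \<Longrightarrow> z (k-1) \<le> y (k-1) \<Longrightarrow> slope bw y k \<le> slope bw z k"
  unfolding slope_def by (intro divide_right_mono) auto

lemma slope_antimono:
  assumes "concave_seq t bw y" and "1 \<le> j" "j \<le> k" "k \<le> t+1"
  shows "slope bw y k \<le> slope bw y j"
  using assms(3,4)
proof (induction k rule: dec_induct)
  case (step m)
  then have "slope bw y (m+1) \<le> slope bw y m"
    using assms(1,2) unfolding concave_seq_def by auto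
  with step show ?case by simp
qed simp

lemma concave_seq_lower_first:
  assumes "concave_seq t bw z" "c \<le> z 0"
  shows "concave_seq t bw (z(0 := c))"
  unfolding concave_seq_def
proof
  fix j assume j: "j \<in> {1..t}"
  have "slope bw (z(0 := c)) (j+1) = slope bw z (j+1)"
    using j by (simp add: slope_def)
  also have "\<dots> \<le> slope bw z j"
    using assms(1) j unfolding concave_seq_def by auto
  also have "\<dots> \<le> slope bw (z(0 := c)) j"
    using assms(2) j by (intro slope_mono) auto
  finally show "slope bw (z(0 := c)) (j+1) \<le> slope bw (z(0 := c)) j" .
qed

lemma concave_seq_lower_last:
  assumes "concave_seq t bw z" "c \<le> z (t+1)"
  shows "concave_seq t bw (z(t+1 := c))"
  unfolding concave_seq_def
proof
  fix j assume j: "j \<in> {1..t}"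
  have "slope bw (z(t+1 := c)) (j+1) \<le> slope bw z (j+1)"
    using assms(2) j by (intro slope_mono) auto
  also have "\<dots> \<le> slope bw z j"
    using assms(1) j unfolding concave_seq_def by auto
  also have "\<dots> = slope bw (z(t+1 := c)) j"
  proof -
    have "j - 1 \<noteq> t+1" "j \<noteq> t+1" using j by auto
    then show ?thesis by (simp add: slope_def)
  qed
  finally show "slope bw (z(t+1 := c)) (j+1) \<le> slope bw (z(t+1 := c)) j" .
qed

lemma concave_seq_lower_corner:
  assumes bpos: "\<forall>i\<in>{1..t+1}. bw i > 0" and conc: "concave_seq t bw z"
    and j: "j \<in> {1..t}" and d: "0 \<le> d" "2 * d \<le> slope bw z j - slope bw z (j+1)"
  shows "concave_seq t bw (z(j := z j - d))"
  unfolding concave_seq_def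
proof
  let ?y = "z(j := z j - d)"
  fix i assume i: "i \<in> {1..t}"
  show "slope bw ?y (i+1) \<le> slope bw ?y i"
  proof (cases "i = j")
    case True
    have b: "real (bw j) \<ge> 1" "real (bw (j+1)) \<ge> 1"
      using bpos j by (auto simp: Suc_le_eq)
    have "slope bw ?y (j+1) = slope bw z (j+1) + d / real (bw (j+1))"
      using b by (simp add: slope_def field_simps)
    moreover have "slope bw ?y j = slope bw z j - d / real (bw j)"
    proof -
      have "j - 1 \<noteq> j" using j by auto
      with b show ?thesis by (simp add: slope_def field_simps)
    qed
    moreover have "d / real (bw (j+1)) \<le> d" "d / real (bw j) \<le> d"
      using b d by (auto simp: divide_le_eq mult_le_cancel_left1)
    ultimately have "slope bw ?y (j+1) \<le> slope bw ?y j"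
      using d by linarith
    with True show ?thesis by simp
  next
    case False
    have "slope bw ?y (i+1) \<le> slope bw z (i+1)"
      using False d by (intro slope_mono) auto
    also have "\<dots> \<le> slope bw z i"
      using conc i unfolding concave_seq_def by auto
    also have "\<dots> \<le> slope bw ?y i"
      using False d by (intro slope_mono) auto
    finally show ?thesis .
  qed
qed

locale least_concave_seq_majorant =
  fixes t :: nat and bw :: "nat \<Rightarrow> nat" and w z :: "nat \<Rightarrow> real"
  assumes bpos: "\<forall>i\<in>{1..t+1}. bw i > 0"
    and concave: "concave_seq t bw z"
    and majorant: "\<forall>j\<le>t+1. w j \<le> z j"
    and least: "\<And>y j. concave_seq t bw y \<Longrightarrow> \<forall>k\<le>t+1. w k \<le> y k \<Longrightarrow> j \<le> t+1 \<Longrightarrow> z j \<le> y j"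
begin

lemma touches_first: "z 0 = w 0"
proof -
  have "z 0 \<le> (z(0 := w 0)) 0"
    using majorant by (intro least concave_seq_lower_first concave) auto
  with majorant[rule_format, of 0] show ?thesis by simp
qed

lemma touches_last: "z (t+1) = w (t+1)"
proof -
  have "z (t+1) \<le> (z(t+1 := w (t+1))) (t+1)"
    using majorant by (intro least concave_seq_lower_last concave) auto
  with majorant[rule_format, of "t+1"] show ?thesis by simp
qed

lemma touches_corner:
  assumes j: "j \<in> {1..t}" and corner: "slope bw z (j+1) < slope bw z j"
  shows "z j = w j"
proof (rule ccontr)
  assume "z j \<noteq> w j"
  moreover have "w j \<le> z j" using majorant j by simp
  ultimately have gap: "w j < z j" by simp
  define d where "d = min (z j - w j) ((slope bw z j - slope bw z (j+1)) / 2)"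
  have d: "0 < d" "2 * d \<le> slope bw z j - slope bw z (j+1)"
    using gap corner unfolding d_def by (auto simp: min_def)
  have "concave_seq t bw (z(j := z j - d))"
    using d by (intro concave_seq_lower_corner bpos concave j) auto
  moreover have "\<forall>k\<le>t+1. w k \<le> (z(j := z j - d)) k"
    using majorant by (auto simp: d_def)
  ultimately have "z j \<le> (z(j := z j - d)) j"
    using j by (intro least[of "z(j := z j - d)" j]) auto
  with d show False by simp
qed

end

subsection \<open>The concave interpolation of a concave sequence\<close>

definition segment_line :: "(nat \<Rightarrow> nat) \<Rightarrow> (nat \<Rightarrow> real) \<Rightarrow> nat \<Rightarrow> real \<Rightarrow> real" where
  "segment_line bw y i s = y (i-1) + slope bw y i * (s - bs bw (i-1))"

definition concave_interp :: "nat \<Rightarrow> (nat \<Rightarrow> nat) \<Rightarrow> (nat \<Rightarrow> real) \<Rightarrow> real \<Rightarrow> real" where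
  "concave_interp t bw y s = Min ((\<lambda>i. segment_line bw y i s) ` {1..t+1})"

lemma segment_line_bs_Suc:
  "segment_line bw y i (bs bw (Suc m)) = segment_line bw y i (bs bw m) + slope bw y i * real (bw (Suc m))"
  by (simp add: segment_line_def bs_Suc algebra_simps)

lemma seq_Suc_eq_slope: "bw (Suc m) > 0 \<Longrightarrow> y (Suc m) = y m + slope bw y (Suc m) * real (bw (Suc m))"
  by (simp add: slope_def)

lemma knot_le_segment_line_right:
  assumes bpos: "\<forall>i\<in>{1..t+1}. bw i > 0" and conc: "concave_seq t bw y"
    and i: "1 \<le> i" and k: "i - 1 \<le> k" "k \<le> t+1"
  shows "y k \<le> segment_line bw y i (bs bw k)"
  using k(1)
proof (induction k rule: dec_induct)
  case (step m)
  have "slope bw y (Suc m) * real (bw (Suc m)) \<le> slope bw y i * real (bw (Suc m))"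
    using slope_antimono[OF conc, of i "Suc m"] i k step by (intro mult_right_mono) auto
  moreover have "y (Suc m) = y m + slope bw y (Suc m) * real (bw (Suc m))"
    using bpos k step by (intro seq_Suc_eq_slope) auto
  ultimately show ?case
    unfolding segment_line_bs_Suc using step.IH by linarith
qed (simp add: segment_line_def)

lemma knot_le_segment_line_left:
  assumes bpos: "\<forall>i\<in>{1..t+1}. bw i > 0" and conc: "concave_seq t bw y"
    and i: "i \<le> t+1" and k: "k \<le> i - 1"
  shows "y k \<le> segment_line bw y i (bs bw k)"
  using k
proof (induction k rule: inc_induct)
  case (step m)
  have "slope bw y i * real (bw (Suc m)) \<le> slope bw y (Suc m) * real (bw (Suc m))"
    using slope_antimono[OF conc, of "Suc m" i] i step by (intro mult_right_mono) auto
  moreover have "y (Suc m) = y m + slope bw y (Suc m) * real (bw (Suc m))"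
    using bpos step i by (intro seq_Suc_eq_slope) auto
  ultimately show ?case
    using step.IH unfolding segment_line_bs_Suc by linarith
qed (simp add: segment_line_def)

lemma knot_le_segment_line:
  assumes "\<forall>i\<in>{1..t+1}. bw i > 0" "concave_seq t bw y"
    and "1 \<le> i" "i \<le> t+1" "k \<le> t+1"
  shows "y k \<le> segment_line bw y i (bs bw k)"
  using knot_le_segment_line_right[OF assms(1,2)] knot_le_segment_line_left[OF assms(1,2)] assms(3-5)
  by (cases "i - 1 \<le> k") auto

lemma concave_interp_knot:
  assumes bpos: "\<forall>i\<in>{1..t+1}. bw i > 0" and conc: "concave_seq t bw y" and k: "k \<le> t+1"
  shows "concave_interp t bw y (bs bw k) = y k"
proof -
  have "y k \<in> (\<lambda>i. segment_line bw y i (bs bw k)) ` {1..t+1}"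
  proof (cases k)
    case 0
    then show ?thesis
      by (intro image_eqI[of _ _ 1]) (auto simp: segment_line_def)
  next
    case (Suc m)
    with bpos k have "segment_line bw y k (bs bw k) = y k"
      by (simp add: segment_line_def slope_def bs_Suc)
    with Suc k show ?thesis
      by (intro image_eqI[of _ _ k]) auto
  qed
  then show ?thesis
    unfolding concave_interp_def using knot_le_segment_line[OF bpos conc _ _ k]
    by (intro antisym Min_le) (auto intro!: Min.boundedI)
qed

lemma concave_on_concave_interp: "concave_on {a..b} (concave_interp t bw y)"
  unfolding concave_on_iff
proof (intro conjI ballI allI impI)
  fix x z u w :: real
  assume uw: "u \<ge> 0" "w \<ge> 0" "u + w = 1"
  have "u * concave_interp t bw y x + w * concave_interp t bw y z
      \<le> segment_line bw y i (u *\<^sub>R x + w *\<^sub>R z)" if "i \<in> {1..t+1}" for i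
  proof -
    have "u * concave_interp t bw y x + w * concave_interp t bw y z
        \<le> u * segment_line bw y i x + w * segment_line bw y i z"
      using that uw unfolding concave_interp_def
      by (intro add_mono mult_left_mono Min_le) auto
    also have "\<dots> = segment_line bw y i (u *\<^sub>R x + w *\<^sub>R z)"
      using uw by (simp add: segment_line_def algebra_simps flip: distrib_right)
    finally show ?thesis .
  qed
  then show "u * concave_interp t bw y x + w * concave_interp t bw y z
      \<le> concave_interp t bw y (u *\<^sub>R x + w *\<^sub>R z)"
    unfolding concave_interp_def by (subst Min_ge_iff) auto
qed simp

subsection \<open>The piecewise linear function and its least concave majorant\<close>

lemma interpolation_le_line:
  fixes a b r p q \<alpha> \<beta> :: real
  assumes "a < r" "r \<le> b" "p \<le> \<alpha> + \<beta> * a" "q \<le> \<alpha> + \<beta> * b"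
  shows "p + (q - p) * (r - a) / (b - a) \<le> \<alpha> + \<beta> * r"
proof -
  define \<theta> where "\<theta> = (r - a) / (b - a)"
  have \<theta>: "0 \<le> \<theta>" "\<theta> \<le> 1" "r = a + \<theta> * (b - a)"
    using assms(1,2) by (auto simp: \<theta>_def divide_le_eq)
  have "(q - p) * (r - a) / (b - a) = \<theta> * (q - p)"
    unfolding \<theta>_def by simp
  then have "p + (q - p) * (r - a) / (b - a) = (1 - \<theta>) * p + \<theta> * q"
    by (simp add: algebra_simps)
  also have "\<dots> \<le> (1 - \<theta>) * (\<alpha> + \<beta> * a) + \<theta> * (\<alpha> + \<beta> * b)"
    using assms(3,4) \<theta> by (intro add_mono mult_left_mono) auto
  also have "\<dots> = \<alpha> + \<beta> * r"
    by (simp add: \<theta>(3) algebra_simps)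
  finally show ?thesis .
qed

lemma plin_bs:
  assumes bpos: "\<forall>i\<in>{1..t+1}. bw i > 0" and k: "k \<le> t+1"
  shows "plin bw v (bs bw k) = ws bw v k"
proof (cases k)
  case 0
  have "(LEAST i. (0::real) \<le> bs bw i) = 0"
    by (rule Least_eq_0) simp
  with 0 show ?thesis by (simp add: plin_def)
next
  case (Suc m)
  have "(LEAST i. bs bw k \<le> bs bw i) = k"
    using bs_strict_mono[OF bpos _ k] by (intro Least_equality) (auto simp: not_le[symmetric])
  moreover have "bs bw m < bs bw (Suc m)"
    using bs_strict_mono[OF bpos, of m "Suc m"] Suc k by simp
  ultimately show ?thesis
    unfolding plin_def Let_def using Suc by simp
qed

lemma plin_between_bs:
  assumes r: "0 < r" "r \<le> bs bw (t+1)"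
  obtains k where "k \<in> {1..t+1}" "bs bw (k-1) < r" "r \<le> bs bw k"
    "plin bw v r = ws bw v (k-1)
       + (ws bw v k - ws bw v (k-1)) * (r - bs bw (k-1)) / (bs bw k - bs bw (k-1))"
proof -
  define k where "k = (LEAST i. r \<le> bs bw i)"
  have rk: "r \<le> bs bw k"
    unfolding k_def using r(2) by (rule LeastI)
  have "k \<le> t+1"
    unfolding k_def using r(2) by (rule Least_le)
  moreover have k0: "k \<noteq> 0"
    using rk r(1) by (intro notI) simp
  moreover have "bs bw (k-1) < r"
    using not_less_Least[of "k-1" "\<lambda>i. r \<le> bs bw i"] k0 unfolding k_def[symmetric] by simp
  moreover have "plin bw v r = ws bw v (k-1)
      + (ws bw v k - ws bw v (k-1)) * (r - bs bw (k-1)) / (bs bw k - bs bw (k-1))"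
    using k0 unfolding plin_def Let_def k_def[symmetric] by simp
  ultimately show thesis
    using that[of k] rk by simp
qed

lemma plin_le_concave_interp:
  assumes bpos: "\<forall>i\<in>{1..t+1}. bw i > 0" and conc: "concave_seq t bw y"
    and maj: "\<forall>j\<le>t+1. ws bw v j \<le> y j" and r: "r \<in> {0..bs bw (t+1)}"
  shows "plin bw v r \<le> concave_interp t bw y r"
proof (cases "r = 0")
  case True
  then show ?thesis
    using plin_bs[OF bpos, of 0] concave_interp_knot[OF bpos conc, of 0] maj[rule_format, of 0]
    by simp
next
  case False
  with r obtain k where k: "k \<in> {1..t+1}" "bs bw (k-1) < r" "r \<le> bs bw k"
    and pl: "plin bw v r = ws bw v (k-1)
       + (ws bw v k - ws bw v (k-1)) * (r - bs bw (k-1)) / (bs bw k - bs bw (k-1))"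
    using plin_between_bs[of r bw t v] by auto
  have "plin bw v r \<le> segment_line bw y i r" if i: "i \<in> {1..t+1}" for i
  proof -
    let ?\<alpha> = "y (i-1) - slope bw y i * bs bw (i-1)" and ?\<beta> = "slope bw y i"
    have line: "segment_line bw y i s = ?\<alpha> + ?\<beta> * s" for s
      by (simp add: segment_line_def algebra_simps)
    have "ws bw v j \<le> ?\<alpha> + ?\<beta> * bs bw j" if "j \<le> t+1" for j
      using maj knot_le_segment_line[OF bpos conc _ _ that, of i] i that
      unfolding line by force
    then show ?thesis
      unfolding pl line using k by (intro interpolation_le_line) auto
  qed
  then show ?thesis
    unfolding concave_interp_def by (subst Min_ge_iff) auto
qed

definition concave_majorant :: "nat \<Rightarrow> (nat \<Rightarrow> nat) \<Rightarrow> (nat \<Rightarrow> real) \<Rightarrow> (real \<Rightarrow> real) \<Rightarrow> bool" where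
  "concave_majorant t bw v h \<longleftrightarrow>
     concave_on {0..bs bw (t+1)} h \<and> (\<forall>r\<in>{0..bs bw (t+1)}. plin bw v r \<le> h r)"

lemma concave_env_eq_Inf: "concave_env t bw v s = Inf {h s | h. concave_majorant t bw v h}"
  unfolding concave_env_def concave_majorant_def by simp

lemma concave_majorant_concave_interp:
  assumes "\<forall>i\<in>{1..t+1}. bw i > 0" "concave_seq t bw y" "\<forall>j\<le>t+1. ws bw v j \<le> y j"
  shows "concave_majorant t bw v (concave_interp t bw y)"
  unfolding concave_majorant_def
  using concave_on_concave_interp plin_le_concave_interp[OF assms] by blast

lemma concave_majorant_exists:
  assumes bpos: "\<forall>i\<in>{1..t+1}. bw i > 0"
  shows "\<exists>h. concave_majorant t bw v h"
proof -
  define M where "M = (\<Sum>j\<le>t+1. \<bar>ws bw v j\<bar>)"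
  have "ws bw v j \<le> M" if "j \<le> t+1" for j
    using member_le_sum[of j "{..t+1}" "\<lambda>j. \<bar>ws bw v j\<bar>"] that unfolding M_def by simp
  moreover have "concave_seq t bw (\<lambda>_. M)"
    by (simp add: concave_seq_def slope_def)
  ultimately show ?thesis
    using concave_majorant_concave_interp[OF bpos] by blast
qed

lemma plin_le_concave_env:
  assumes "\<forall>i\<in>{1..t+1}. bw i > 0" "s \<in> {0..bs bw (t+1)}"
  shows "plin bw v s \<le> concave_env t bw v s"
  unfolding concave_env_eq_Inf
  using concave_majorant_exists[OF assms(1), of v] assms(2)
  by (intro cInf_greatest) (auto simp: concave_majorant_def)

lemma concave_env_le:
  assumes "concave_majorant t bw v h" "s \<in> {0..bs bw (t+1)}"
  shows "concave_env t bw v s \<le> h s"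
  unfolding concave_env_eq_Inf
proof (rule cInf_lower)
  show "h s \<in> {h s |h. concave_majorant t bw v h}"
    using assms(1) by blast
  show "bdd_below {h s |h. concave_majorant t bw v h}"
    using assms(2) by (intro bdd_belowI[of _ "plin bw v s"]) (auto simp: concave_majorant_def)
qed

lemma concave_on_concave_env:
  assumes bpos: "\<forall>i\<in>{1..t+1}. bw i > 0"
  shows "concave_on {0..bs bw (t+1)} (concave_env t bw v)"
  unfolding concave_on_iff
proof (intro conjI ballI allI impI)
  fix x z u w :: real
  assume xz: "x \<in> {0..bs bw (t+1)}" "z \<in> {0..bs bw (t+1)}" and uw: "u \<ge> 0" "w \<ge> 0" "u + w = 1"
  show "u * concave_env t bw v x + w * concave_env t bw v z \<le> concave_env t bw v (u *\<^sub>R x + w *\<^sub>R z)"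
    unfolding concave_env_eq_Inf[of t bw v "u *\<^sub>R x + w *\<^sub>R z"]
  proof (rule cInf_greatest)
    show "{h (u *\<^sub>R x + w *\<^sub>R z) |h. concave_majorant t bw v h} \<noteq> {}"
      using concave_majorant_exists[OF bpos] by auto
    fix m assume "m \<in> {h (u *\<^sub>R x + w *\<^sub>R z) |h. concave_majorant t bw v h}"
    then obtain h where h: "concave_majorant t bw v h" and m: "m = h (u *\<^sub>R x + w *\<^sub>R z)"
      by auto
    have "u * concave_env t bw v x + w * concave_env t bw v z \<le> u * h x + w * h z"
      using concave_env_le[OF h] xz uw by (intro add_mono mult_left_mono) auto
    also have "\<dots> \<le> h (u *\<^sub>R x + w *\<^sub>R z)"
      using h xz uw unfolding concave_majorant_def concave_on_iff by blast
    finally show "u * concave_env t bw v x + w * concave_env t bw v z \<le> m"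
      using m by simp
  qed
qed simp

lemma concave_seq_wt:
  assumes bpos: "\<forall>i\<in>{1..t+1}. bw i > 0"
  shows "concave_seq t bw (wt t bw v)"
  unfolding concave_seq_def
proof
  fix j assume j: "j \<in> {1..t}"
  obtain m where m: "j = Suc m"
    using j by (cases j) auto
  define a b c where "a = bs bw (j-1)" "b = bs bw j" "c = bs bw (j+1)"
  have ba: "b - a = real (bw j)" and cb: "c - b = real (bw (j+1))"
    unfolding a_b_c_def m by (simp_all add: bs_Suc)
  have pos: "0 < real (bw j)" "0 < real (bw (j+1))"
    using bpos j by auto
  define f where "f = (\<lambda>s. - concave_env t bw v s)"
  have "convex_on {0..bs bw (t+1)} f"
    using concave_on_concave_env[OF bpos, of v] by (simp add: concave_on_def f_def)
  moreover have "a \<in> {0..bs bw (t+1)}" "c \<in> {0..bs bw (t+1)}"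
    unfolding a_b_c_def using j bs_in_range[of "j-1" t bw] bs_in_range[of "j+1" t bw] by auto
  moreover have "a < b" "b < c"
    using ba cb pos by simp_all
  ultimately have le: "(f a - f b) / (a - b) \<le> (f b - f c) / (b - c)"
    using convex_on_slope_le by (meson order_trans)
  have "slope bw (wt t bw v) j = (f a - f b) / (b - a)"
    using ba by (simp add: slope_def wt_def f_def a_b_c_def)
  also have "\<dots> = - ((f a - f b) / (a - b))"
    by (metis minus_diff_eq minus_divide_right)
  finally have sj: "slope bw (wt t bw v) j = - ((f a - f b) / (a - b))" .
  have "slope bw (wt t bw v) (j+1) = (f b - f c) / (c - b)"
    using cb by (simp add: slope_def wt_def f_def a_b_c_def)
  also have "\<dots> = - ((f b - f c) / (b - c))"
    by (metis minus_diff_eq minus_divide_right)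
  finally show "slope bw (wt t bw v) (j+1) \<le> slope bw (wt t bw v) j"
    using le sj by linarith
qed

lemma ws_le_wt:
  assumes bpos: "\<forall>i\<in>{1..t+1}. bw i > 0" and k: "k \<le> t+1"
  shows "ws bw v k \<le> wt t bw v k"
  using plin_le_concave_env[OF bpos bs_in_range[OF k], of v] plin_bs[OF bpos k]
  by (simp add: wt_def)

lemma wt_le_concave_seq:
  assumes bpos: "\<forall>i\<in>{1..t+1}. bw i > 0" and "concave_seq t bw y" "\<forall>j\<le>t+1. ws bw v j \<le> y j"
    and k: "k \<le> t+1"
  shows "wt t bw v k \<le> y k"
  using concave_env_le[OF concave_majorant_concave_interp[OF assms(1-3)] bs_in_range[OF k]]
    concave_interp_knot[OF bpos assms(2) k]
  by (simp add: wt_def)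

lemma least_concave_seq_majorant_wt:
  assumes "\<forall>i\<in>{1..t+1}. bw i > 0"
  shows "least_concave_seq_majorant t bw (ws bw v) (wt t bw v)"
  using assms concave_seq_wt ws_le_wt wt_le_concave_seq
  by unfold_locales blast+

lemma Gamma_v_eq_slope: "Gamma_v t bw v i = - slope bw (wt t bw v) i"
  unfolding Gamma_v_def slope_def by (simp only: minus_divide_left)

lemma Gamma_v_in_cone:
  assumes "\<forall>i\<in>{1..t+1}. bw i > 0"
  shows "Gamma_v t bw v \<in> cone t"
  using concave_seq_wt[OF assms] unfolding cone_def concave_seq_def Gamma_v_eq_slope by auto

lemma ws_Gamma_v:
  assumes bpos: "\<forall>i\<in>{1..t+1}. bw i > 0" and i: "i \<le> t+1"
  shows "ws bw (Gamma_v t bw v) i = wt t bw v i"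
  using i
proof (induction i)
  case 0
  then show ?case
    using least_concave_seq_majorant.touches_first[OF least_concave_seq_majorant_wt[OF bpos]] by simp
next
  case (Suc i)
  then have "real (bw (Suc i)) \<noteq> 0"
    using bpos by auto
  with Suc show ?case
    by (simp add: ws_Suc Gamma_v_def)
qed

lemma ws_Gamma_v_last:
  assumes bpos: "\<forall>i\<in>{1..t+1}. bw i > 0" and vsum: "ws bw v (t+1) = 0"
  shows "ws bw (Gamma_v t bw v) (t+1) = 0"
  using ws_Gamma_v[OF bpos] vsum
    least_concave_seq_majorant.touches_last[OF least_concave_seq_majorant_wt[OF bpos]]
  by simp

lemma summation_by_parts:
  fixes x z :: "nat \<Rightarrow> real"
  shows "(\<Sum>i=1..t+1. x i * (z (i-1) - z i)) =
     z 0 * x 1 - z (t+1) * x (t+1) + (\<Sum>i=1..t. z i * (x (i+1) - x i))"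
  by (induction t) (simp_all add: algebra_simps)

lemma ip_by_parts:
  assumes "ws bw y (t+1) = 0"
  shows "ip t bw x y = (\<Sum>i=1..t. ws bw y i * (x (i+1) - x i))"
proof -
  have "ip t bw x y = (\<Sum>i=1..t+1. x i * (ws bw y (i-1) - ws bw y i))"
    unfolding ip_def
  proof (rule sum.cong)
    fix i assume "i \<in> {1..t+1}"
    then obtain m where "i = Suc m"
      by (cases i) auto
    then show "real (bw i) * x i * y i = x i * (ws bw y (i-1) - ws bw y i)"
      by (simp add: ws_Suc)
  qed simp
  with assms summation_by_parts[of x "ws bw y" t] show ?thesis
    by simp
qed

lemma ip_le_ip_Gamma_v:
  assumes bpos: "\<forall>i\<in>{1..t+1}. bw i > 0" and vsum: "ws bw v (t+1) = 0" and x: "x \<in> cone t"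
  shows "ip t bw x v \<le> ip t bw x (Gamma_v t bw v)"
proof -
  have ipG: "ip t bw x (Gamma_v t bw v) = (\<Sum>i=1..t. ws bw (Gamma_v t bw v) i * (x (i+1) - x i))"
    by (rule ip_by_parts[OF ws_Gamma_v_last[OF bpos vsum]])
  have termwise: "ws bw v i * (x (i+1) - x i) \<le> ws bw (Gamma_v t bw v) i * (x (i+1) - x i)"
    if "i \<in> {1..t}" for i
    using that x ws_le_wt[OF bpos, of i] ws_Gamma_v[OF bpos, of i]
    by (intro mult_right_mono) (auto simp: cone_def)
  show ?thesis
    unfolding ip_by_parts[OF vsum] ipG by (intro sum_mono termwise)
qed

text \<open>\<open>\<Gamma>\<^sub>v\<close> only moves at the corners of the envelope, where \<open>wt\<close> and \<open>ws\<close> agree.\<close>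

lemma ip_Gamma_v_v:
  assumes bpos: "\<forall>i\<in>{1..t+1}. bw i > 0" and vsum: "ws bw v (t+1) = 0"
  shows "ip t bw (Gamma_v t bw v) v = ip t bw (Gamma_v t bw v) (Gamma_v t bw v)"
proof -
  let ?G = "Gamma_v t bw v" and ?z = "wt t bw v"
  interpret least_concave_seq_majorant t bw "ws bw v" ?z
    by (rule least_concave_seq_majorant_wt[OF bpos])
  have ipG: "ip t bw ?G ?G = (\<Sum>i=1..t. ws bw ?G i * (?G (i+1) - ?G i))"
    by (rule ip_by_parts[OF ws_Gamma_v_last[OF bpos vsum]])
  have termwise: "ws bw v i * (?G (i+1) - ?G i) = ws bw ?G i * (?G (i+1) - ?G i)"
    if i: "i \<in> {1..t}" for i
  proof (cases "slope bw ?z (i+1) < slope bw ?z i")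
    case True
    then show ?thesis
      using touches_corner[OF i] ws_Gamma_v[OF bpos, of i] i by simp
  next
    case False
    then have "?G (i+1) = ?G i"
      using concave i unfolding concave_seq_def Gamma_v_eq_slope by force
    then show ?thesis by simp
  qed
  show ?thesis
    unfolding ip_by_parts[OF vsum] ipG by (intro sum.cong refl termwise)
qed

lemma ip_self_nonneg: "0 \<le> ip t bw x x"
  unfolding ip_def by (intro sum_nonneg) (simp add: mult.assoc)

lemma ip_self_pos:
  assumes bpos: "\<forall>i\<in>{1..t+1}. bw i > 0" and nz: "nonzero_vec t x"
  shows "0 < ip t bw x x"
proof -
  obtain i where i: "i \<in> {1..t+1}" "x i \<noteq> 0"
    using nz unfolding nonzero_vec_def by auto
  then have "0 < real (bw i) * x i * x i"
    using bpos by (auto simp: mult.assoc zero_less_mult_iff)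
  also have "\<dots> \<le> ip t bw x x"
    unfolding ip_def using i by (intro member_le_sum) (auto simp: mult.assoc)
  finally show ?thesis .
qed

lemma wnorm_eq_L2_set: "wnorm t bw x = L2_set (\<lambda>i. sqrt (real (bw i)) * x i) {1..t+1}"
proof -
  have "(sqrt (real (bw i)) * x i)\<^sup>2 = real (bw i) * x i * x i" for i
    by (simp add: power_mult_distrib power2_eq_square)
  then show ?thesis
    unfolding wnorm_def L2_set_def ip_def by simp
qed

lemma ip_le_wnorm_mult: "ip t bw x y \<le> wnorm t bw x * wnorm t bw y"
proof -
  have "ip t bw x y = (\<Sum>i=1..t+1. (sqrt (real (bw i)) * x i) * (sqrt (real (bw i)) * y i))"
    unfolding ip_def by (intro sum.cong) (auto simp: algebra_simps)
  also have "\<dots> \<le> (\<Sum>i=1..t+1. \<bar>sqrt (real (bw i)) * x i\<bar> * \<bar>sqrt (real (bw i)) * y i\<bar>)"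
    by (intro sum_mono) (simp add: abs_mult[symmetric])
  also have "\<dots> \<le> wnorm t bw x * wnorm t bw y"
    unfolding wnorm_eq_L2_set by (rule L2_set_mult_ineq)
  finally show ?thesis .
qed

lemma mu_le_mu_if_dominating:
  assumes bpos: "\<forall>i\<in>{1..t+1}. bw i > 0" and nz: "nonzero_vec t x" "nonzero_vec t g"
    and dom: "ip t bw x v \<le> ip t bw x g" and self: "ip t bw g v = ip t bw g g"
  shows "mu t bw v x \<le> mu t bw v g"
proof -
  have nx: "wnorm t bw x > 0" and ng: "wnorm t bw g > 0"
    unfolding wnorm_def using ip_self_pos[OF bpos] nz by auto
  have "mu t bw v x \<le> ip t bw x g / wnorm t bw x"
    unfolding mu_def using dom nx by (simp add: divide_right_mono)
  also have "\<dots> \<le> wnorm t bw g"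
    using ip_le_wnorm_mult[of t bw x g] nx by (simp add: divide_le_eq mult.commute)
  also have "\<dots> = mu t bw v g"
    unfolding mu_def self using ng ip_self_nonneg[of t bw g]
    by (simp add: wnorm_def field_simps)
  finally show ?thesis .
qed

theorem theorem2p2:
  fixes t :: nat and bw :: "nat \<Rightarrow> nat" and v :: "nat \<Rightarrow> real"
  assumes bpos: "\<forall>i\<in>{1..t+1}. bw i > 0"
    and vnz: "nonzero_vec t v"
    and vsum: "(\<Sum>i=1..t+1. v i * real (bw i)) = 0"
    and pos: "\<exists>G\<in>cone t. nonzero_vec t G \<and> mu t bw v G > 0"
  shows "Gamma_v t bw v \<in> cone t \<and> nonzero_vec t (Gamma_v t bw v) \<and>
         (\<forall>G\<in>cone t. nonzero_vec t G \<longrightarrow> mu t bw v G \<le> mu t bw v (Gamma_v t bw v))"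
proof -
  let ?G = "Gamma_v t bw v"
  have ws_last: "ws bw v (t+1) = 0"
    unfolding ws_def using vsum by (simp add: mult.commute)
  have nz: "nonzero_vec t ?G"
  proof (rule ccontr)
    obtain x where x: "x \<in> cone t" "mu t bw v x > 0"
      using pos by auto
    assume "\<not> nonzero_vec t ?G"
    then have "ip t bw x ?G = 0"
      unfolding nonzero_vec_def ip_def by simp
    then have "ip t bw x v \<le> 0"
      using ip_le_ip_Gamma_v[OF bpos ws_last x(1)] by simp
    then have "mu t bw v x \<le> 0"
      unfolding mu_def wnorm_def by (intro divide_nonpos_nonneg) (simp_all add: ip_self_nonneg)
    with x(2) show False
      by simp
  qed
  show ?thesis
    using Gamma_v_in_cone[OF bpos] nz mu_le_mu_if_dominating[OF bpos _ nz]
      ip_le_ip_Gamma_v[OF bpos ws_last] ip_Gamma_v_v[OF bpos ws_last]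
    by blast
qed

end
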